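(* Let $(\mathcal L,[\,,\,])$ be a Lie algebra over a field $\mathbf{k}$ (any dimension and characteristic) with basis $X=\{x_j\mid j\in J\}$, and let $k\in\mathbf{k}$ be nonzero. Let $((\hat A,\hat q),\hat i)$ be the free invariant algebra generated by $X$ (constructed as below), extend $\hat i$ linearly to an injective linear map $\hat i:\mathcal L\to\hat A$, write $\hat x:=\hat i(x)$, and let $R$ be the two-sided ideal of $\hat A$ generated by all elements $$\widehat{[x,y]}-\hat x\hat y+\hat y\hat x+\hat x\hat y\hat q-\hat y\hat x\hat q-k\hat x\hat q\hat y+k\hat y\hat q\hat x,\qquad x,y\in\mathcal L.$$ Let $\mathcal U:=\hat A/R$, $\bar q:=\hat q+R$, and $i:\mathcal L\to(\mathcal U,\bar q)$, $i(x):=\hat x+R$. Then $((\mathcal U,\bar q),i)$ is an enveloping$^{6\text{-th}}$ algebra of $(\mathcal L,[\,,\,])$.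
   Context: Invariant algebra: for an associative algebra $A$ (with identity) and idempotent $q$, $(A,q):=\{x\in A\mid qxq=qx\}$. Invariant homomorphism $(A,q_A)\to(B,q_B)$: linear, multiplicative, sending $1_A\mapsto1_B$ and $q_A\mapsto q_B$. On $(A,q)$, $[x,y]_{6,k}:=xy-yx-xyq+yxq+kxqy-kyqx$ is a Lie bracket; denote this Lie algebra $Lie((A,q),[\,,\,]_{6,k})$. Free invariant algebra on $X$: let $V$ have basis $X\cup\{\tilde q\}$ ($\tilde q\notin X$), $I\subseteq T(V)$ the ideal generated by $\tilde q\otimes\tilde q-\tilde q$ and $\tilde q\otimes a\otimes\tilde q-\tilde q\otimes a$ ($a\in T(V)$), $\hat A=T(V)/I$, $\hat q=\tilde q+I$, $\hat i(x_j)=x_j+I$; the images $\hat i(x_j)$ are linearly independent. An enveloping$^{6\text{-th}}$ algebra of $\mathcal L$ is a pair $((\mathcal U,\bar q),i)$ with $(\mathcal U,\bar q)$ an invariant algebra and $i:\mathcal L\to(\mathcal U,\bar q)$ such that (i) $i$ is a Lie algebra homomorphism $(\mathcal L,[\,,\,])\to Lie((\mathcal U,\bar q),[\,,\,]_{6,k})$, and (ii) for every invariant algebra $(A,q)$ and every Lie algebra homomorphism $f:\mathcal L\to Lie((A,q),[\,,\,]_{6,k})$ there is a unique invariant homomorphism $f':(\mathcal U,\bar q)\to(A,q)$ with $f=f'\circ i$. *)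

theory Defs
  imports Main "HOL.Vector_Spaces" "HOL-Algebra.QuotRing"
begin

definition lie_algebra ::
  "('k::field \<Rightarrow> 'L::ab_group_add \<Rightarrow> 'L) \<Rightarrow> ('L \<Rightarrow> 'L \<Rightarrow> 'L) \<Rightarrow> bool" where
  "lie_algebra sL br \<longleftrightarrow> Vector_Spaces.vector_space sL \<and>
     (\<forall>x y z. br (x + y) z = br x z + br y z) \<and>
     (\<forall>x y z. br x (y + z) = br x y + br x z) \<and>
     (\<forall>c x y. br (sL c x) y = sL c (br x y)) \<and>
     (\<forall>c x y. br x (sL c y) = sL c (br x y)) \<and>
     (\<forall>x. br x x = 0) \<and>
     (\<forall>x y z. br x (br y z) + br y (br z x) + br z (br x y) = 0)"

definition kalg :: "('a, 'm) ring_scheme \<Rightarrow> ('k::field \<Rightarrow> 'a \<Rightarrow> 'a) \<Rightarrow> bool" where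
  "kalg A sm \<longleftrightarrow> ring A \<and>
     (\<forall>c. \<forall>x\<in>carrier A. sm c x \<in> carrier A) \<and>
     (\<forall>c. \<forall>x\<in>carrier A. \<forall>y\<in>carrier A. sm c (x \<oplus>\<^bsub>A\<^esub> y) = sm c x \<oplus>\<^bsub>A\<^esub> sm c y) \<and>
     (\<forall>c d. \<forall>x\<in>carrier A. sm (c + d) x = sm c x \<oplus>\<^bsub>A\<^esub> sm d x) \<and>
     (\<forall>c d. \<forall>x\<in>carrier A. sm (c * d) x = sm c (sm d x)) \<and>
     (\<forall>x\<in>carrier A. sm 1 x = x) \<and>
     (\<forall>c. \<forall>x\<in>carrier A. \<forall>y\<in>carrier A.
        sm c (x \<otimes>\<^bsub>A\<^esub> y) = sm c x \<otimes>\<^bsub>A\<^esub> y \<and> sm c (x \<otimes>\<^bsub>A\<^esub> y) = x \<otimes>\<^bsub>A\<^esub> sm c y)"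

definition inv_algebra :: "('a, 'm) ring_scheme \<Rightarrow> ('k::field \<Rightarrow> 'a \<Rightarrow> 'a) \<Rightarrow> 'a \<Rightarrow> bool" where
  "inv_algebra A sm q \<longleftrightarrow> kalg A sm \<and> q \<in> carrier A \<and> q \<otimes>\<^bsub>A\<^esub> q = q"

definition inv_carrier :: "('a, 'm) ring_scheme \<Rightarrow> 'a \<Rightarrow> 'a set" where
  "inv_carrier A q = {x \<in> carrier A. q \<otimes>\<^bsub>A\<^esub> x \<otimes>\<^bsub>A\<^esub> q = q \<otimes>\<^bsub>A\<^esub> x}"

definition br6 :: "('a, 'm) ring_scheme \<Rightarrow> ('k::field \<Rightarrow> 'a \<Rightarrow> 'a) \<Rightarrow> 'a \<Rightarrow> 'k \<Rightarrow> 'a \<Rightarrow> 'a \<Rightarrow> 'a" where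
  "br6 A sm q k x y =
     x \<otimes>\<^bsub>A\<^esub> y \<ominus>\<^bsub>A\<^esub> y \<otimes>\<^bsub>A\<^esub> x
     \<ominus>\<^bsub>A\<^esub> x \<otimes>\<^bsub>A\<^esub> y \<otimes>\<^bsub>A\<^esub> q \<oplus>\<^bsub>A\<^esub> y \<otimes>\<^bsub>A\<^esub> x \<otimes>\<^bsub>A\<^esub> q
     \<oplus>\<^bsub>A\<^esub> sm k (x \<otimes>\<^bsub>A\<^esub> q \<otimes>\<^bsub>A\<^esub> y) \<ominus>\<^bsub>A\<^esub> sm k (y \<otimes>\<^bsub>A\<^esub> q \<otimes>\<^bsub>A\<^esub> x)"

definition lie_hom6 ::
  "('k::field \<Rightarrow> 'L::ab_group_add \<Rightarrow> 'L) \<Rightarrow> ('L \<Rightarrow> 'L \<Rightarrow> 'L) \<Rightarrow> 'k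
   \<Rightarrow> ('a, 'm) ring_scheme \<Rightarrow> ('k \<Rightarrow> 'a \<Rightarrow> 'a) \<Rightarrow> 'a \<Rightarrow> ('L \<Rightarrow> 'a) \<Rightarrow> bool" where
  "lie_hom6 sL br k A sm q f \<longleftrightarrow>
     (\<forall>x. f x \<in> inv_carrier A q) \<and>
     (\<forall>x y. f (x + y) = f x \<oplus>\<^bsub>A\<^esub> f y) \<and>
     (\<forall>c x. f (sL c x) = sm c (f x)) \<and>
     (\<forall>x y. f (br x y) = br6 A sm q k (f x) (f y))"

definition inv_hom ::
  "('a, 'm) ring_scheme \<Rightarrow> ('k::field \<Rightarrow> 'a \<Rightarrow> 'a) \<Rightarrow> 'a
   \<Rightarrow> ('b, 'n) ring_scheme \<Rightarrow> ('k \<Rightarrow> 'b \<Rightarrow> 'b) \<Rightarrow> 'b \<Rightarrow> ('a \<Rightarrow> 'b) \<Rightarrow> bool" where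
  "inv_hom A smA qA B smB qB \<phi> \<longleftrightarrow>
     (\<forall>x\<in>inv_carrier A qA. \<phi> x \<in> inv_carrier B qB) \<and>
     (\<forall>x\<in>inv_carrier A qA. \<forall>y\<in>inv_carrier A qA. \<phi> (x \<oplus>\<^bsub>A\<^esub> y) = \<phi> x \<oplus>\<^bsub>B\<^esub> \<phi> y) \<and>
     (\<forall>c. \<forall>x\<in>inv_carrier A qA. \<phi> (smA c x) = smB c (\<phi> x)) \<and>
     (\<forall>x\<in>inv_carrier A qA. \<forall>y\<in>inv_carrier A qA. \<phi> (x \<otimes>\<^bsub>A\<^esub> y) = \<phi> x \<otimes>\<^bsub>B\<^esub> \<phi> y) \<and>
     \<phi> \<one>\<^bsub>A\<^esub> = \<one>\<^bsub>B\<^esub> \<and> \<phi> qA = qB"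

definition quot_sm :: "('a, 'm) ring_scheme \<Rightarrow> 'a set \<Rightarrow> ('k \<Rightarrow> 'a \<Rightarrow> 'a) \<Rightarrow> 'k \<Rightarrow> 'a set \<Rightarrow> 'a set" where
  "quot_sm A I sm c X = (\<Union>x\<in>X. I +>\<^bsub>A\<^esub> sm c x)"

text \<open>Letters: Some j stands for x_j, None stands for q~. T(V) is realised as the
 finitely supported k-valued functions on words (the k-span of words), with concatenation
 product.\<close>

definition tens_alg :: "('j option list \<Rightarrow> 'k::field) ring" where
  "tens_alg = \<lparr>carrier = {f. finite {w. f w \<noteq> 0}},
     mult = (\<lambda>f g w. \<Sum>n\<le>length w. f (take n w) * g (drop n w)),
     one = (\<lambda>w. if w = [] then 1 else 0),
     zero = (\<lambda>w. 0),
     add = (\<lambda>f g w. f w + g w)\<rparr>"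

definition tens_sm :: "'k::field \<Rightarrow> ('j option list \<Rightarrow> 'k) \<Rightarrow> ('j option list \<Rightarrow> 'k)" where
  "tens_sm c f = (\<lambda>w. c * f w)"

definition tens_letter :: "'j option \<Rightarrow> ('j option list \<Rightarrow> 'k::field)" where
  "tens_letter a = (\<lambda>w. if w = [a] then 1 else 0)"

definition free_ideal :: "('j option list \<Rightarrow> 'k::field) set" where
  "free_ideal = Idl\<^bsub>tens_alg\<^esub>
     ({tens_letter None \<otimes>\<^bsub>tens_alg\<^esub> tens_letter None \<ominus>\<^bsub>tens_alg\<^esub> tens_letter None} \<union>
      {tens_letter None \<otimes>\<^bsub>tens_alg\<^esub> a \<otimes>\<^bsub>tens_alg\<^esub> tens_letter None
         \<ominus>\<^bsub>tens_alg\<^esub> tens_letter None \<otimes>\<^bsub>tens_alg\<^esub> a | a. a \<in> carrier tens_alg})"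

definition free_inv :: "('j option list \<Rightarrow> 'k::field) set ring" where
  "free_inv = tens_alg Quot free_ideal"

definition free_inv_sm :: "'k::field \<Rightarrow> ('j option list \<Rightarrow> 'k) set \<Rightarrow> ('j option list \<Rightarrow> 'k) set" where
  "free_inv_sm = quot_sm tens_alg free_ideal tens_sm"

definition free_inv_q :: "('j option list \<Rightarrow> 'k::field) set" where
  "free_inv_q = free_ideal +>\<^bsub>tens_alg\<^esub> tens_letter None"

text \<open>Linear extension of x_j |-> x_j to L -> T(V) (coordinates w.r.t. the basis b),
 followed by the projection to A^: this is the linear extension of i^.\<close>
definition hat_i :: "('k::field \<Rightarrow> 'L::ab_group_add \<Rightarrow> 'L) \<Rightarrow> ('j \<Rightarrow> 'L) \<Rightarrow> 'L
     \<Rightarrow> ('j option list \<Rightarrow> 'k) set" where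
  "hat_i sL b x = free_ideal +>\<^bsub>tens_alg\<^esub>
     (\<lambda>w. case w of [Some j] \<Rightarrow> module.representation sL (range b) x (b j) | _ \<Rightarrow> 0)"

definition rel6 :: "('k::field \<Rightarrow> 'L::ab_group_add \<Rightarrow> 'L) \<Rightarrow> ('L \<Rightarrow> 'L \<Rightarrow> 'L) \<Rightarrow> ('j \<Rightarrow> 'L) \<Rightarrow> 'k
     \<Rightarrow> 'L \<Rightarrow> 'L \<Rightarrow> ('j option list \<Rightarrow> 'k) set" where
  "rel6 sL br b k x y =
     (let A = free_inv; X = hat_i sL b x; Y = hat_i sL b y; Q = free_inv_q in
      hat_i sL b (br x y) \<ominus>\<^bsub>A\<^esub> X \<otimes>\<^bsub>A\<^esub> Y \<oplus>\<^bsub>A\<^esub> Y \<otimes>\<^bsub>A\<^esub> X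
        \<oplus>\<^bsub>A\<^esub> X \<otimes>\<^bsub>A\<^esub> Y \<otimes>\<^bsub>A\<^esub> Q \<ominus>\<^bsub>A\<^esub> Y \<otimes>\<^bsub>A\<^esub> X \<otimes>\<^bsub>A\<^esub> Q
        \<ominus>\<^bsub>A\<^esub> free_inv_sm k (X \<otimes>\<^bsub>A\<^esub> Q \<otimes>\<^bsub>A\<^esub> Y)
        \<oplus>\<^bsub>A\<^esub> free_inv_sm k (Y \<otimes>\<^bsub>A\<^esub> Q \<otimes>\<^bsub>A\<^esub> X))"

definition rel_ideal :: "('k::field \<Rightarrow> 'L::ab_group_add \<Rightarrow> 'L) \<Rightarrow> ('L \<Rightarrow> 'L \<Rightarrow> 'L) \<Rightarrow> ('j \<Rightarrow> 'L) \<Rightarrow> 'k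
     \<Rightarrow> ('j option list \<Rightarrow> 'k) set set" where
  "rel_ideal sL br b k = Idl\<^bsub>free_inv\<^esub> {rel6 sL br b k x y | x y. True}"

definition env_U :: "('k::field \<Rightarrow> 'L::ab_group_add \<Rightarrow> 'L) \<Rightarrow> ('L \<Rightarrow> 'L \<Rightarrow> 'L) \<Rightarrow> ('j \<Rightarrow> 'L) \<Rightarrow> 'k
     \<Rightarrow> ('j option list \<Rightarrow> 'k) set set ring" where
  "env_U sL br b k = free_inv Quot rel_ideal sL br b k"

definition env_sm :: "('k::field \<Rightarrow> 'L::ab_group_add \<Rightarrow> 'L) \<Rightarrow> ('L \<Rightarrow> 'L \<Rightarrow> 'L) \<Rightarrow> ('j \<Rightarrow> 'L) \<Rightarrow> 'k
     \<Rightarrow> 'k \<Rightarrow> ('j option list \<Rightarrow> 'k) set set \<Rightarrow> ('j option list \<Rightarrow> 'k) set set" where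
  "env_sm sL br b k = quot_sm free_inv (rel_ideal sL br b k) free_inv_sm"

definition env_q :: "('k::field \<Rightarrow> 'L::ab_group_add \<Rightarrow> 'L) \<Rightarrow> ('L \<Rightarrow> 'L \<Rightarrow> 'L) \<Rightarrow> ('j \<Rightarrow> 'L) \<Rightarrow> 'k
     \<Rightarrow> ('j option list \<Rightarrow> 'k) set set" where
  "env_q sL br b k = rel_ideal sL br b k +>\<^bsub>free_inv\<^esub> free_inv_q"

definition env_i :: "('k::field \<Rightarrow> 'L::ab_group_add \<Rightarrow> 'L) \<Rightarrow> ('L \<Rightarrow> 'L \<Rightarrow> 'L) \<Rightarrow> ('j \<Rightarrow> 'L) \<Rightarrow> 'k
     \<Rightarrow> 'L \<Rightarrow> ('j option list \<Rightarrow> 'k) set set" where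
  "env_i sL br b k x = rel_ideal sL br b k +>\<^bsub>free_inv\<^esub> hat_i sL b x"

end

theory Submission
  imports Defs "HOL-Algebra.UnivPoly"
begin

(*
  The enveloping algebra U is a quotient of the tensor algebra T(V) on X \<union> {q~}.  Given a Lie
  homomorphism f from L to Lie((A,q),[,]_{6,k}), evaluating words at x_j \<mapsto> f x_j and q~ \<mapsto> q
  gives an algebra map \<Phi> : T(V) \<rightarrow> A.  Its values lie in (A,q), which is closed under products,
  so \<Phi> kills the relations q~q~ = q~ and q~aq~ = q~a defining the free invariant algebra; and
  since f turns brackets into [,]_{6,k}, \<Phi> also kills the relations R.  Hence \<Phi> descends to
  the required f' on U.

  For uniqueness, note that the same relations make every element u of U invariant (q u q = q u).
  So an invariant homomorphism from U is an algebra homomorphism on all of U, and as such it is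
  determined by its values on the generators q and i(x_j).
*)

section \<open>Algebras over a field and invariant algebras\<close>

locale kalgebra = ring A for A :: "('a, 'm) ring_scheme" (structure) +
  fixes sm :: "'k::field \<Rightarrow> 'a \<Rightarrow> 'a"
  assumes smult_closed [simp]: "x \<in> carrier A \<Longrightarrow> sm c x \<in> carrier A"
    and smult_r_distr: "x \<in> carrier A \<Longrightarrow> y \<in> carrier A \<Longrightarrow> sm c (x \<oplus> y) = sm c x \<oplus> sm c y"
    and smult_l_distr: "x \<in> carrier A \<Longrightarrow> sm (c + d) x = sm c x \<oplus> sm d x"
    and smult_assoc1: "x \<in> carrier A \<Longrightarrow> sm (c * d) x = sm c (sm d x)"
    and smult_one [simp]: "x \<in> carrier A \<Longrightarrow> sm 1 x = x"
    and smult_mult_left: "x \<in> carrier A \<Longrightarrow> y \<in> carrier A \<Longrightarrow> sm c (x \<otimes> y) = sm c x \<otimes> y"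
    and smult_mult_right: "x \<in> carrier A \<Longrightarrow> y \<in> carrier A \<Longrightarrow> sm c (x \<otimes> y) = x \<otimes> sm c y"

lemma kalg_iff_kalgebra: "kalg A sm \<longleftrightarrow> kalgebra A sm"
proof
  assume "kalg A sm"
  then show "kalgebra A sm"
    unfolding kalg_def kalgebra_def kalgebra_axioms_def by blast
next
  assume "kalgebra A sm"
  then interpret kalgebra A sm .
  show "kalg A sm"
    unfolding kalg_def
    by (auto simp: ring_axioms smult_r_distr smult_l_distr smult_assoc1 intro: smult_mult_left smult_mult_right)
qed

locale inv_kalgebra = kalgebra +
  fixes q
  assumes q_closed [simp]: "q \<in> carrier A" and q_idem: "q \<otimes> q = q"

lemma inv_algebra_iff_inv_kalgebra: "inv_algebra A sm q \<longleftrightarrow> inv_kalgebra A sm q"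
  unfolding inv_algebra_def inv_kalgebra_def inv_kalgebra_axioms_def kalg_iff_kalgebra by blast

context kalgebra
begin

lemma smult_r_null [simp]: "sm c \<zero> = \<zero>"
proof -
  have "sm c \<zero> \<oplus> sm c \<zero> = sm c \<zero> \<oplus> \<zero>"
    using smult_r_distr[of \<zero> \<zero> c] by simp
  then show ?thesis
    by simp
qed

lemma smult_l_null [simp]: "x \<in> carrier A \<Longrightarrow> sm 0 x = \<zero>"
proof -
  assume x: "x \<in> carrier A"
  then have "sm 0 x \<oplus> sm 0 x = sm 0 x \<oplus> \<zero>"
    using smult_l_distr[OF x, of 0 0] by simp
  then show ?thesis
    using x by simp
qed

lemma smult_finsum:
  assumes "f \<in> S \<rightarrow> carrier A"
  shows "sm c (finsum A f S) = finsum A (\<lambda>i. sm c (f i)) S"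
  using assms
proof (induction S rule: infinite_finite_induct)
  case (insert x S)
  then show ?case by (simp add: finsum_insert smult_r_distr Pi_iff)
qed simp_all

lemma smult_mult_smult:
  assumes "x \<in> carrier A" "y \<in> carrier A"
  shows "sm c x \<otimes> sm d y = sm (c * d) (x \<otimes> y)"
proof -
  have "sm (c * d) (x \<otimes> y) = sm c (x \<otimes> sm d y)"
    using assms by (simp add: smult_assoc1 smult_mult_right)
  also have "\<dots> = sm c x \<otimes> sm d y"
    using assms by (simp add: smult_mult_left)
  finally show ?thesis by simp
qed

lemma finsum_smult_mult:
  assumes "finite S" "finite T" "a \<in> S \<rightarrow> carrier A" "b \<in> T \<rightarrow> carrier A"
  shows "finsum A (\<lambda>u. sm (c u) (a u)) S \<otimes> finsum A (\<lambda>v. sm (d v) (b v)) T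
       = finsum A (\<lambda>u. finsum A (\<lambda>v. sm (c u * d v) (a u \<otimes> b v)) T) S"
proof -
  have "finsum A (\<lambda>u. sm (c u) (a u)) S \<otimes> finsum A (\<lambda>v. sm (d v) (b v)) T
      = finsum A (\<lambda>u. sm (c u) (a u) \<otimes> finsum A (\<lambda>v. sm (d v) (b v)) T) S"
    using assms by (intro finsum_ldistr) (auto simp: Pi_iff intro!: finsum_closed)
  also have "\<dots> = finsum A (\<lambda>u. finsum A (\<lambda>v. sm (c u) (a u) \<otimes> sm (d v) (b v)) T) S"
    using assms by (intro finsum_cong' refl finsum_rdistr) (auto simp: Pi_iff intro!: finsum_closed)
  also have "\<dots> = finsum A (\<lambda>u. finsum A (\<lambda>v. sm (c u * d v) (a u \<otimes> b v)) T) S"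
    using assms by (intro finsum_cong' refl) (auto simp: smult_mult_smult Pi_iff)
  finally show ?thesis .
qed

end

context inv_kalgebra
begin

lemma inv_carrier_iff: "x \<in> inv_carrier A q \<longleftrightarrow> x \<in> carrier A \<and> q \<otimes> x \<otimes> q = q \<otimes> x"
  by (simp add: inv_carrier_def)

lemma inv_carrier_one: "\<one> \<in> inv_carrier A q"
  by (simp add: inv_carrier_iff q_idem)

lemma inv_carrier_q: "q \<in> inv_carrier A q"
  by (simp add: inv_carrier_iff q_idem)

lemma inv_carrier_add:
  "x \<in> inv_carrier A q \<Longrightarrow> y \<in> inv_carrier A q \<Longrightarrow> x \<oplus> y \<in> inv_carrier A q"
  by (simp add: inv_carrier_iff l_distr r_distr)

lemma inv_carrier_mult:
  assumes "x \<in> inv_carrier A q" "y \<in> inv_carrier A q"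
  shows "x \<otimes> y \<in> inv_carrier A q"
proof -
  have x: "x \<in> carrier A" "q \<otimes> x \<otimes> q = q \<otimes> x" and y: "y \<in> carrier A" "q \<otimes> y \<otimes> q = q \<otimes> y"
    using assms by (auto simp: inv_carrier_iff)
  note c = x(1) y(1) q_closed
  have "q \<otimes> (x \<otimes> y) \<otimes> q = (q \<otimes> x) \<otimes> (y \<otimes> q)" using c by (simp add: m_assoc)
  also have "\<dots> = (q \<otimes> x \<otimes> q) \<otimes> (y \<otimes> q)" using x(2) by simp
  also have "\<dots> = (q \<otimes> x) \<otimes> (q \<otimes> y \<otimes> q)" using c by (simp add: m_assoc)
  also have "\<dots> = (q \<otimes> x) \<otimes> (q \<otimes> y)" using y(2) by simp
  also have "\<dots> = (q \<otimes> x \<otimes> q) \<otimes> y" using c by (simp add: m_assoc)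
  also have "\<dots> = q \<otimes> x \<otimes> y" using x(2) by simp
  also have "\<dots> = q \<otimes> (x \<otimes> y)" using c by (simp add: m_assoc)
  finally show ?thesis
    using x y by (simp add: inv_carrier_iff)
qed

lemma inv_carrier_smult:
  assumes "x \<in> inv_carrier A q"
  shows "sm c x \<in> inv_carrier A q"
proof -
  have x: "x \<in> carrier A" "q \<otimes> x \<otimes> q = q \<otimes> x"
    using assms by (auto simp: inv_carrier_iff)
  have "q \<otimes> sm c x \<otimes> q = sm c (q \<otimes> x) \<otimes> q"
    using x by (simp add: smult_mult_right)
  also have "\<dots> = sm c (q \<otimes> x \<otimes> q)"
    using x(1) by (simp add: smult_mult_left)
  also have "\<dots> = q \<otimes> sm c x"
    using x by (simp add: smult_mult_right)
  finally show ?thesis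
    using x by (simp add: inv_carrier_iff)
qed

lemma inv_carrier_finsum:
  assumes "\<And>i. i \<in> S \<Longrightarrow> f i \<in> inv_carrier A q"
  shows "finsum A f S \<in> inv_carrier A q"
  using assms
proof (induction S rule: infinite_finite_induct)
  case (insert x S)
  then have "f \<in> S \<rightarrow> carrier A" "f x \<in> carrier A"
    by (auto simp: inv_carrier_iff)
  with insert show ?case
    by (simp add: finsum_insert inv_carrier_add)
qed (simp_all add: inv_carrier_iff)

end

lemma inv_hom_imp_ring_hom:
  assumes "inv_carrier A qA = carrier A" "inv_hom A smA qA B smB qB h"
  shows "h \<in> ring_hom A B"
  using assms by (intro ring_hom_memI) (auto simp: inv_hom_def inv_carrier_def)

lemma ring_hom_imp_inv_hom:
  assumes "h \<in> ring_hom A B" "\<And>c x. x \<in> carrier A \<Longrightarrow> h (smA c x) = smB c (h x)" "h qA = qB"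
    "\<And>x. x \<in> carrier A \<Longrightarrow> h x \<in> inv_carrier B qB"
  shows "inv_hom A smA qA B smB qB h"
  using assms by (auto simp: inv_hom_def inv_carrier_def ring_hom_add ring_hom_mult ring_hom_one)

section \<open>Quotient algebras\<close>

lemma (in ring) eq_of_minus_eq_zero:
  "a \<in> carrier R \<Longrightarrow> b \<in> carrier R \<Longrightarrow> a \<ominus> b = \<zero> \<Longrightarrow> a = b"
  by (simp add: a_minus_def add.inv_solve_right')

lemma FactRing_carrier_rcos: "carrier (R Quot I) = (+>\<^bsub>R\<^esub>) I ` carrier R"
  by (auto simp: FactRing_def A_RCOSETS_def')

context kalgebra
begin

lemma smult_ideal_closed:
  assumes "ideal I A" "i \<in> I"
  shows "sm c i \<in> I"
proof -
  interpret ideal I A by fact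
  have "i \<in> carrier A"
    using assms(2) by (rule a_Hcarr)
  then have "sm c i = sm c \<one> \<otimes> i"
    by (metis l_one one_closed smult_mult_left)
  then show ?thesis
    using assms(2) by (simp add: I_l_closed)
qed

lemma quot_sm_rcos:
  assumes "ideal I A" "a \<in> carrier A"
  shows "quot_sm A I sm c (I +> a) = I +> sm c a"
proof -
  interpret ideal I A by fact
  have "I +> sm c x = I +> sm c a" if "x \<in> I +> a" for x
  proof -
    obtain h where h: "h \<in> I" "x = h \<oplus> a"
      using \<open>x \<in> I +> a\<close> by (auto simp: a_r_coset_def')
    then have "sm c x = sm c h \<oplus> sm c a"
      using assms(2) by (simp add: smult_r_distr a_Hcarr)
    then have "sm c x \<in> I +> sm c a"
      using smult_ideal_closed[OF assms(1) h(1)] by (auto simp: a_r_coset_def')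
    then show ?thesis
      using assms(2) by (simp add: a_repr_independence')
  qed
  moreover have "a \<in> I +> a"
    using assms(2) by (rule a_rcos_self)
  ultimately show ?thesis
    unfolding quot_sm_def by blast
qed

lemma kalgebra_quot:
  assumes "ideal I A"
  shows "kalgebra (A Quot I) (quot_sm A I sm)"
proof -
  interpret ideal I A by fact
  have add: "(I +> x) \<oplus>\<^bsub>A Quot I\<^esub> (I +> y) = I +> (x \<oplus> y)"
    and mult: "(I +> x) \<otimes>\<^bsub>A Quot I\<^esub> (I +> y) = I +> (x \<otimes> y)"
    if "x \<in> carrier A" "y \<in> carrier A" for x y
    using that by (simp_all add: ring_hom_add[OF rcos_ring_hom] ring_hom_mult[OF rcos_ring_hom])
  note sm = quot_sm_rcos[OF assms]
  have ring: "ring (A Quot I)"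
    by (rule quotient_is_ring)
  show ?thesis
  proof (intro kalgebra.intro kalgebra_axioms.intro ring)
    fix X Y c d
    assume "X \<in> carrier (A Quot I)"
    then obtain x where x: "x \<in> carrier A" "X = I +> x"
      by (auto simp: FactRing_carrier_rcos)
    show "quot_sm A I sm c X \<in> carrier (A Quot I)"
      using x by (simp add: sm FactRing_carrier_rcos)
    show "quot_sm A I sm (c + d) X = quot_sm A I sm c X \<oplus>\<^bsub>A Quot I\<^esub> quot_sm A I sm d X"
      using x by (simp add: sm add smult_l_distr)
    show "quot_sm A I sm (c * d) X = quot_sm A I sm c (quot_sm A I sm d X)"
      using x by (simp add: sm smult_assoc1)
    show "quot_sm A I sm 1 X = X"
      using x by (simp add: sm)
    assume "Y \<in> carrier (A Quot I)"
    then obtain y where y: "y \<in> carrier A" "Y = I +> y"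
      by (auto simp: FactRing_carrier_rcos)
    show "quot_sm A I sm c (X \<oplus>\<^bsub>A Quot I\<^esub> Y) = quot_sm A I sm c X \<oplus>\<^bsub>A Quot I\<^esub> quot_sm A I sm c Y"
      using x y by (simp add: sm add smult_r_distr)
    show "quot_sm A I sm c (X \<otimes>\<^bsub>A Quot I\<^esub> Y) = quot_sm A I sm c X \<otimes>\<^bsub>A Quot I\<^esub> Y"
      using x y by (simp add: sm mult smult_mult_left)
    show "quot_sm A I sm c (X \<otimes>\<^bsub>A Quot I\<^esub> Y) = X \<otimes>\<^bsub>A Quot I\<^esub> quot_sm A I sm c Y"
      using x y by (simp add: sm mult smult_mult_right)
  qed
qed

end

lemma image_rcos_kernel:
  assumes "ring_hom_ring R S h" "ideal I R" "I \<subseteq> a_kernel R S h" "x \<in> carrier R"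
  shows "h ` (I +>\<^bsub>R\<^esub> x) = {h x}"
proof -
  interpret h: ring_hom_ring R S h by fact
  interpret ideal I R by fact
  have "h (i \<oplus>\<^bsub>R\<^esub> x) = h x" if "i \<in> I" for i
  proof -
    have "i \<in> carrier R" "h i = \<zero>\<^bsub>S\<^esub>"
      using subsetD[OF assms(3) that] unfolding a_kernel_def' by blast+
    then show ?thesis
      using assms(4) by simp
  qed
  then have "h ` (I +>\<^bsub>R\<^esub> x) \<subseteq> {h x}"
    by (auto simp: a_r_coset_def')
  moreover have "h x \<in> h ` (I +>\<^bsub>R\<^esub> x)"
    using a_rcos_self[OF assms(4)] by (rule imageI)
  ultimately show ?thesis
    by blast
qed

lemma the_elem_image_rcos:
  "ring_hom_ring R S h \<Longrightarrow> ideal I R \<Longrightarrow> I \<subseteq> a_kernel R S h \<Longrightarrow> x \<in> carrier R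
    \<Longrightarrow> the_elem (h ` (I +>\<^bsub>R\<^esub> x)) = h x"
  by (simp add: image_rcos_kernel)

lemma the_elem_image_ring_hom:
  assumes "ring_hom_ring R S h" "ideal I R" "I \<subseteq> a_kernel R S h"
  shows "(\<lambda>X. the_elem (h ` X)) \<in> ring_hom (R Quot I) S"
proof -
  interpret h: ring_hom_ring R S h by fact
  interpret ideal I R by fact
  note descend = the_elem_image_rcos[OF assms]
  show ?thesis
  proof (rule ring_hom_memI)
    fix X Y
    assume "X \<in> carrier (R Quot I)"
    then obtain x where x: "x \<in> carrier R" "X = I +>\<^bsub>R\<^esub> x"
      by (auto simp: FactRing_carrier_rcos)
    show "the_elem (h ` X) \<in> carrier S"
      using x by (simp add: descend)
    assume "Y \<in> carrier (R Quot I)"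
    then obtain y where y: "y \<in> carrier R" "Y = I +>\<^bsub>R\<^esub> y"
      by (auto simp: FactRing_carrier_rcos)
    have "X \<otimes>\<^bsub>R Quot I\<^esub> Y = I +>\<^bsub>R\<^esub> (x \<otimes>\<^bsub>R\<^esub> y)"
      using x y by (simp add: ring_hom_mult[OF rcos_ring_hom])
    then show "the_elem (h ` (X \<otimes>\<^bsub>R Quot I\<^esub> Y)) = the_elem (h ` X) \<otimes>\<^bsub>S\<^esub> the_elem (h ` Y)"
      using x y by (simp add: descend)
    have "X \<oplus>\<^bsub>R Quot I\<^esub> Y = I +>\<^bsub>R\<^esub> (x \<oplus>\<^bsub>R\<^esub> y)"
      using x y by (simp add: ring_hom_add[OF rcos_ring_hom])
    then show "the_elem (h ` (X \<oplus>\<^bsub>R Quot I\<^esub> Y)) = the_elem (h ` X) \<oplus>\<^bsub>S\<^esub> the_elem (h ` Y)"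
      using x y by (simp add: descend)
  next
    have "\<one>\<^bsub>R Quot I\<^esub> = I +>\<^bsub>R\<^esub> \<one>\<^bsub>R\<^esub>"
      by (rule ring_hom_one[OF rcos_ring_hom, symmetric])
    then show "the_elem (h ` \<one>\<^bsub>R Quot I\<^esub>) = \<one>\<^bsub>S\<^esub>"
      by (simp add: descend)
  qed
qed

section \<open>The tensor algebra\<close>

lemma tens_alg_carrier: "carrier tens_alg = {f. finite {w. f w \<noteq> 0}}"
  by (simp add: tens_alg_def)

lemma tens_alg_add: "f \<oplus>\<^bsub>tens_alg\<^esub> g = (\<lambda>w. f w + g w)"
  by (simp add: tens_alg_def)

lemma tens_alg_zero: "\<zero>\<^bsub>tens_alg\<^esub> = (\<lambda>w. 0)"
  by (simp add: tens_alg_def)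

lemma tens_alg_one: "\<one>\<^bsub>tens_alg\<^esub> = (\<lambda>w. if w = [] then 1 else 0)"
  by (simp add: tens_alg_def)

lemma tens_alg_mult:
  "(f \<otimes>\<^bsub>tens_alg\<^esub> g) w = (\<Sum>n\<le>length w. f (take n w) * g (drop n w))"
  by (simp add: tens_alg_def)

lemma tens_alg_mult_assoc:
  fixes f g h :: "'a option list \<Rightarrow> 'k::field"
  shows "(f \<otimes>\<^bsub>tens_alg\<^esub> g) \<otimes>\<^bsub>tens_alg\<^esub> h = f \<otimes>\<^bsub>tens_alg\<^esub> (g \<otimes>\<^bsub>tens_alg\<^esub> h)"
proof
  fix w :: "'a option list"
  define L where "L = length w"
  define F where "F m r = f (take m w) * g (take r (drop m w)) * h (drop (m + r) w)" for m r
  have "((f \<otimes>\<^bsub>tens_alg\<^esub> g) \<otimes>\<^bsub>tens_alg\<^esub> h) w = (\<Sum>n\<le>L. \<Sum>m\<le>n. F m (n - m))"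
    by (auto simp: tens_alg_mult L_def F_def sum_distrib_right take_take drop_take min_absorb1
        intro!: sum.cong)
  also have "\<dots> = (\<Sum>(m,r)\<in>{(m,r). m + r \<le> L}. F m r)"
    by (rule sum.triangle_reindex_eq[symmetric])
  also have "\<dots> = (\<Sum>m\<le>L. \<Sum>r\<le>L - m. F m r)"
  proof -
    have "{(m,r). m + r \<le> L} = Sigma {..L} (\<lambda>m. {..L - m})"
      by auto
    then show ?thesis
      by (simp add: sum.Sigma)
  qed
  also have "\<dots> = (f \<otimes>\<^bsub>tens_alg\<^esub> (g \<otimes>\<^bsub>tens_alg\<^esub> h)) w"
    by (auto simp: tens_alg_mult L_def F_def sum_distrib_left mult.assoc drop_drop add.commute
        intro!: sum.cong)
  finally show "((f \<otimes>\<^bsub>tens_alg\<^esub> g) \<otimes>\<^bsub>tens_alg\<^esub> h) w = (f \<otimes>\<^bsub>tens_alg\<^esub> (g \<otimes>\<^bsub>tens_alg\<^esub> h)) w" .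
qed

lemma tens_alg_mult_closed:
  fixes f g :: "'a option list \<Rightarrow> 'k::field"
  assumes "f \<in> carrier tens_alg" "g \<in> carrier tens_alg"
  shows "f \<otimes>\<^bsub>tens_alg\<^esub> g \<in> carrier tens_alg"
proof -
  have "{w. (f \<otimes>\<^bsub>tens_alg\<^esub> g) w \<noteq> 0} \<subseteq> (\<lambda>(u,v). u @ v) ` ({w. f w \<noteq> 0} \<times> {w. g w \<noteq> 0})"
  proof
    fix w assume "w \<in> {w. (f \<otimes>\<^bsub>tens_alg\<^esub> g) w \<noteq> 0}"
    then have "(\<Sum>n\<le>length w. f (take n w) * g (drop n w)) \<noteq> 0"
      by (simp add: tens_alg_mult)
    then obtain n where "f (take n w) * g (drop n w) \<noteq> 0"
      using sum.not_neutral_contains_not_neutral by blast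
    then show "w \<in> (\<lambda>(u,v). u @ v) ` ({w. f w \<noteq> 0} \<times> {w. g w \<noteq> 0})"
      by (auto intro!: image_eqI[where x="(take n w, drop n w)"])
  qed
  then show ?thesis
    using assms by (auto simp: tens_alg_carrier intro: finite_subset)
qed

lemma tens_alg_l_one:
  fixes f :: "'a option list \<Rightarrow> 'k::field"
  shows "\<one>\<^bsub>tens_alg\<^esub> \<otimes>\<^bsub>tens_alg\<^esub> f = f"
proof
  fix w :: "'a option list"
  have "(\<Sum>n\<le>length w. (if take n w = [] then 1 else 0) * f (drop n w))
      = (\<Sum>n\<le>length w. if n = 0 then f w else 0)"
    by (intro sum.cong refl) auto
  then show "(\<one>\<^bsub>tens_alg\<^esub> \<otimes>\<^bsub>tens_alg\<^esub> f) w = f w"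
    by (simp add: tens_alg_mult tens_alg_one)
qed

lemma tens_alg_r_one:
  fixes f :: "'a option list \<Rightarrow> 'k::field"
  shows "f \<otimes>\<^bsub>tens_alg\<^esub> \<one>\<^bsub>tens_alg\<^esub> = f"
proof
  fix w :: "'a option list"
  have "(\<Sum>n\<le>length w. f (take n w) * (if drop n w = [] then 1 else 0))
      = (\<Sum>n\<le>length w. if n = length w then f w else 0)"
    by (intro sum.cong refl) auto
  then show "(f \<otimes>\<^bsub>tens_alg\<^esub> \<one>\<^bsub>tens_alg\<^esub>) w = f w"
    by (simp add: tens_alg_mult tens_alg_one)
qed

lemma ring_tens_alg: "ring (tens_alg :: ('a option list \<Rightarrow> 'k::field) ring)"
proof (rule ringI)
  show "abelian_group (tens_alg :: ('a option list \<Rightarrow> 'k) ring)"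
  proof (rule abelian_groupI)
    fix x y :: "'a option list \<Rightarrow> 'k"
    assume "x \<in> carrier tens_alg" "y \<in> carrier tens_alg"
    moreover have "{w. x w + y w \<noteq> 0} \<subseteq> {w. x w \<noteq> 0} \<union> {w. y w \<noteq> 0}"
      by auto
    ultimately show "x \<oplus>\<^bsub>tens_alg\<^esub> y \<in> carrier tens_alg"
      by (auto simp: tens_alg_carrier tens_alg_add intro: finite_subset)
    show "x \<oplus>\<^bsub>tens_alg\<^esub> y = y \<oplus>\<^bsub>tens_alg\<^esub> x"
      by (simp add: tens_alg_add add.commute)
  next
    fix x :: "'a option list \<Rightarrow> 'k"
    assume "x \<in> carrier tens_alg"
    then show "\<exists>y\<in>carrier tens_alg. y \<oplus>\<^bsub>tens_alg\<^esub> x = \<zero>\<^bsub>tens_alg\<^esub>"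
      by (intro bexI[where x="\<lambda>w. - x w"]) (auto simp: tens_alg_carrier tens_alg_add tens_alg_zero)
  qed (auto simp: tens_alg_carrier tens_alg_add tens_alg_zero add.assoc)
next
  show "monoid (tens_alg :: ('a option list \<Rightarrow> 'k) ring)"
    by (rule monoidI)
      (auto simp: tens_alg_mult_closed tens_alg_mult_assoc tens_alg_l_one tens_alg_r_one,
       simp add: tens_alg_carrier tens_alg_one)
qed (auto simp: tens_alg_add fun_eq_iff tens_alg_mult distrib_left distrib_right sum.distrib)

lemma kalgebra_tens_alg: "kalgebra (tens_alg :: ('a option list \<Rightarrow> 'k::field) ring) tens_sm"
proof (intro kalgebra.intro kalgebra_axioms.intro ring_tens_alg)
  fix c :: 'k and x :: "'a option list \<Rightarrow> 'k"
  assume "x \<in> carrier tens_alg"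
  then show "tens_sm c x \<in> carrier tens_alg"
    by (auto simp: tens_alg_carrier tens_sm_def intro: finite_subset[rotated])
qed (auto simp: tens_sm_def tens_alg_add fun_eq_iff tens_alg_mult algebra_simps sum_distrib_left)

definition tens_word :: "'a list \<Rightarrow> 'a list \<Rightarrow> 'k::field" where
  "tens_word u = (\<lambda>w. if w = u then 1 else 0)"

lemma tens_word_carrier: "tens_word u \<in> carrier tens_alg"
  by (auto simp: tens_alg_carrier tens_word_def intro: finite_subset[of _ "{u}"])

lemma tens_letter_eq_word: "tens_letter a = tens_word [a]"
  by (simp add: tens_letter_def tens_word_def)

lemma tens_letter_carrier: "tens_letter a \<in> carrier tens_alg"
  by (simp add: tens_letter_eq_word tens_word_carrier)

lemma tens_alg_one_eq_word: "\<one>\<^bsub>tens_alg\<^esub> = tens_word []"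
  by (simp add: tens_alg_one tens_word_def)

lemma tens_word_mult:
  "tens_word u \<otimes>\<^bsub>tens_alg\<^esub> tens_word v = (tens_word (u @ v) :: 'a option list \<Rightarrow> 'k::field)"
proof
  fix w :: "'a option list"
  have "(\<Sum>n\<le>length w. tens_word u (take n w) * tens_word v (drop n w))
      = (\<Sum>n\<le>length w. if n = length u \<and> w = u @ v then 1 else 0 :: 'k)"
  proof (intro sum.cong refl)
    fix n assume "n \<in> {..length w}"
    then have "take n w = u \<and> drop n w = v \<longleftrightarrow> n = length u \<and> w = u @ v"
      by (auto simp: append_eq_conv_conj min_absorb2)
    then show "tens_word u (take n w) * tens_word v (drop n w)
        = (if n = length u \<and> w = u @ v then 1 else 0)"
      by (auto simp: tens_word_def)
  qed
  also have "\<dots> = tens_word (u @ v) w"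
    by (auto simp: tens_word_def)
  finally show "(tens_word u \<otimes>\<^bsub>tens_alg\<^esub> tens_word v) w = (tens_word (u @ v) w :: 'k)"
    by (simp add: tens_alg_mult)
qed

lemma tens_alg_finsum:
  fixes H :: "'i \<Rightarrow> 'a option list \<Rightarrow> 'k::field"
  assumes "H \<in> I \<rightarrow> carrier tens_alg"
  shows "finsum tens_alg H I = (\<lambda>w. \<Sum>i\<in>I. H i w)"
proof -
  interpret ring "tens_alg :: ('a option list \<Rightarrow> 'k) ring"
    by (rule ring_tens_alg)
  show ?thesis
    using assms
  proof (induction I rule: infinite_finite_induct)
    case (insert x I)
    then show ?case
      by (simp add: finsum_insert tens_alg_add)
  qed (simp_all add: tens_alg_zero)
qed

lemma tens_alg_expand:
  assumes "F \<in> carrier tens_alg"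
  shows "F = finsum tens_alg (\<lambda>u. tens_sm (F u) (tens_word u)) {w. F w \<noteq> 0}"
proof -
  have "finite {w. F w \<noteq> 0}"
    using assms by (simp add: tens_alg_carrier)
  moreover have "(\<lambda>u. tens_sm (F u) (tens_word u)) \<in> {w. F w \<noteq> 0} \<rightarrow> carrier tens_alg"
    using kalgebra.smult_closed[OF kalgebra_tens_alg tens_word_carrier] by blast
  ultimately show ?thesis
    by (auto simp: tens_alg_finsum tens_sm_def tens_word_def fun_eq_iff if_distrib sum.delta
        cong: if_cong)
qed

section \<open>Evaluation of the tensor algebra\<close>

definition word_eval :: "('b, 'm) ring_scheme \<Rightarrow> ('a \<Rightarrow> 'b) \<Rightarrow> 'a list \<Rightarrow> 'b" where
  "word_eval A g w = foldr (\<lambda>a r. g a \<otimes>\<^bsub>A\<^esub> r) w \<one>\<^bsub>A\<^esub>"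

definition tens_eval ::
  "('b, 'm) ring_scheme \<Rightarrow> ('k::field \<Rightarrow> 'b \<Rightarrow> 'b) \<Rightarrow> ('a \<Rightarrow> 'b) \<Rightarrow> ('a list \<Rightarrow> 'k) \<Rightarrow> 'b" where
  "tens_eval A sm g F = finsum A (\<lambda>w. sm (F w) (word_eval A g w)) {w. F w \<noteq> 0}"

locale tens_evaluation = kalgebra A sm
  for A :: "('b, 'm) ring_scheme" (structure) and sm :: "'k::field \<Rightarrow> 'b \<Rightarrow> 'b" +
  fixes g :: "'a option \<Rightarrow> 'b"
  assumes g_closed [simp]: "g a \<in> carrier A"
begin

lemma word_eval_Nil [simp]: "word_eval A g [] = \<one>"
  by (simp add: word_eval_def)

lemma word_eval_Cons [simp]: "word_eval A g (a # w) = g a \<otimes> word_eval A g w"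
  by (simp add: word_eval_def)

lemma word_eval_closed [simp]: "word_eval A g w \<in> carrier A"
  by (induction w) simp_all

lemma word_eval_append: "word_eval A g (u @ v) = word_eval A g u \<otimes> word_eval A g v"
  by (induction u) (simp_all add: m_assoc)

lemma tens_eval_eq:
  assumes "finite S" "{w. F w \<noteq> 0} \<subseteq> S"
  shows "tens_eval A sm g F = finsum A (\<lambda>w. sm (F w) (word_eval A g w)) S"
  unfolding tens_eval_def
  by (rule add.finprod_mono_neutral_cong_left) (use assms in auto)

lemma tens_eval_closed [simp]: "tens_eval A sm g F \<in> carrier A"
  by (simp add: tens_eval_def Pi_iff)

lemma tens_eval_add:
  assumes "F \<in> carrier tens_alg" "G \<in> carrier tens_alg"
  shows "tens_eval A sm g (F \<oplus>\<^bsub>tens_alg\<^esub> G) = tens_eval A sm g F \<oplus> tens_eval A sm g G"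
proof -
  let ?S = "{w. F w \<noteq> 0} \<union> {w. G w \<noteq> 0}"
  have S: "finite ?S"
    using assms by (simp add: tens_alg_carrier)
  have "tens_eval A sm g (F \<oplus>\<^bsub>tens_alg\<^esub> G)
      = finsum A (\<lambda>w. sm (F w) (word_eval A g w) \<oplus> sm (G w) (word_eval A g w)) ?S"
    by (subst tens_eval_eq[OF S]) (auto simp: tens_alg_add smult_l_distr intro!: finsum_cong')
  also have "\<dots> = tens_eval A sm g F \<oplus> tens_eval A sm g G"
    by (simp add: finsum_addf Pi_iff tens_eval_eq[OF S])
  finally show ?thesis .
qed

lemma tens_eval_smult:
  assumes "F \<in> carrier tens_alg"
  shows "tens_eval A sm g (tens_sm c F) = sm c (tens_eval A sm g F)"
proof -
  let ?S = "{w. F w \<noteq> 0}"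
  have S: "finite ?S"
    using assms by (simp add: tens_alg_carrier)
  have "tens_eval A sm g (tens_sm c F) = finsum A (\<lambda>w. sm c (sm (F w) (word_eval A g w))) ?S"
    by (subst tens_eval_eq[OF S]) (auto simp: tens_sm_def smult_assoc1 intro!: finsum_cong')
  also have "\<dots> = sm c (tens_eval A sm g F)"
    by (simp add: tens_eval_def smult_finsum Pi_iff)
  finally show ?thesis .
qed

lemma tens_eval_word: "tens_eval A sm g (tens_word u) = word_eval A g u"
  by (subst tens_eval_eq[of "{u}"]) (auto simp: tens_word_def)

lemma tens_eval_zero: "tens_eval A sm g \<zero>\<^bsub>tens_alg\<^esub> = \<zero>"
  by (simp add: tens_eval_def tens_alg_zero)

lemma tens_eval_finsum:
  assumes "H \<in> I \<rightarrow> carrier tens_alg"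
  shows "tens_eval A sm g (finsum tens_alg H I) = finsum A (\<lambda>i. tens_eval A sm g (H i)) I"
proof -
  interpret T: ring "tens_alg :: ('a option list \<Rightarrow> 'k) ring"
    by (rule ring_tens_alg)
  show ?thesis
    using assms
  proof (induction I rule: infinite_finite_induct)
    case (insert x I)
    then show ?case
      by (simp add: T.finsum_insert finsum_insert tens_eval_add T.finsum_closed)
  qed (simp_all add: tens_eval_zero)
qed

lemma tens_eval_mult:
  assumes F: "F \<in> carrier tens_alg" and G: "G \<in> carrier tens_alg"
  shows "tens_eval A sm g (F \<otimes>\<^bsub>tens_alg\<^esub> G) = tens_eval A sm g F \<otimes> tens_eval A sm g G"
proof -
  interpret T: kalgebra "tens_alg :: ('a option list \<Rightarrow> 'k) ring" tens_sm
    by (rule kalgebra_tens_alg)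
  define S where "S = {w. F w \<noteq> 0}"
  define S' where "S' = {w. G w \<noteq> 0}"
  have fin: "finite S" "finite S'"
    using F G by (simp_all add: S_def S'_def tens_alg_carrier)
  have "F \<otimes>\<^bsub>tens_alg\<^esub> G = finsum tens_alg (\<lambda>u. tens_sm (F u) (tens_word u)) S
      \<otimes>\<^bsub>tens_alg\<^esub> finsum tens_alg (\<lambda>v. tens_sm (G v) (tens_word v)) S'"
    unfolding S_def S'_def using tens_alg_expand[OF F] tens_alg_expand[OF G]
    by (rule arg_cong2[where f = "(\<otimes>\<^bsub>tens_alg\<^esub>)"])
  also have "\<dots> = finsum tens_alg (\<lambda>u. finsum tens_alg (\<lambda>v.
      tens_sm (F u * G v) (tens_word u \<otimes>\<^bsub>tens_alg\<^esub> tens_word v)) S') S"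
    by (rule T.finsum_smult_mult) (simp_all add: fin tens_word_carrier)
  finally have "F \<otimes>\<^bsub>tens_alg\<^esub> G = finsum tens_alg (\<lambda>u. finsum tens_alg (\<lambda>v.
      tens_sm (F u * G v) (tens_word (u @ v))) S') S"
    by (simp add: tens_word_mult)
  then have "tens_eval A sm g (F \<otimes>\<^bsub>tens_alg\<^esub> G) = finsum A (\<lambda>u. tens_eval A sm g
      (finsum tens_alg (\<lambda>v. tens_sm (F u * G v) (tens_word (u @ v))) S')) S"
    by (simp add: tens_eval_finsum T.finsum_closed tens_word_carrier Pi_iff)
  also have "\<dots> = finsum A (\<lambda>u. finsum A (\<lambda>v.
      sm (F u * G v) (word_eval A g u \<otimes> word_eval A g v)) S') S"
    by (intro finsum_cong' refl)
      (simp_all add: tens_eval_finsum tens_word_carrier Pi_iff tens_eval_smult tens_eval_word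
        word_eval_append)
  also have "\<dots> = tens_eval A sm g F \<otimes> tens_eval A sm g G"
    unfolding tens_eval_def S_def[symmetric] S'_def[symmetric]
    by (rule finsum_smult_mult[symmetric]) (simp_all add: fin)
  finally show ?thesis .
qed

lemma tens_eval_ring_hom: "tens_eval A sm g \<in> ring_hom tens_alg A"
  by (rule ring_hom_memI)
    (simp_all add: tens_eval_add tens_eval_mult tens_alg_one_eq_word tens_eval_word)

lemma tens_eval_unique:
  assumes h: "h \<in> ring_hom tens_alg A"
    and h_smult: "\<And>c F. F \<in> carrier tens_alg \<Longrightarrow> h (tens_sm c F) = sm c (h F)"
    and h_letter: "\<And>a. h (tens_letter a) = g a"
    and F: "F \<in> carrier tens_alg"
  shows "h F = tens_eval A sm g F"
proof -
  interpret h: ring_hom_ring tens_alg A h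
    by (intro ring_hom_ringI2 ring_tens_alg ring_axioms h)
  have word: "h (tens_word w) = word_eval A g w" for w
  proof (induction w)
    case Nil
    then show ?case
      by (simp flip: tens_alg_one_eq_word)
  next
    case (Cons a w)
    have "tens_word (a # w) = tens_letter a \<otimes>\<^bsub>tens_alg\<^esub> tens_word w"
      by (simp add: tens_letter_eq_word tens_word_mult)
    then have "h (tens_word (a # w)) = h (tens_letter a) \<otimes> h (tens_word w)"
      by (metis h.hom_mult tens_letter_eq_word tens_word_carrier)
    with Cons show ?case
      by (simp add: h_letter)
  qed
  have "h F = finsum A (\<lambda>u. h (tens_sm (F u) (tens_word u))) {w. F w \<noteq> 0}"
    by (subst tens_alg_expand[OF F]) (simp add: Pi_iff tens_word_carrier kalgebra.smult_closed[OF kalgebra_tens_alg] comp_def)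
  also have "\<dots> = tens_eval A sm g F"
    by (simp add: tens_eval_def h_smult tens_word_carrier word)
  finally show ?thesis .
qed

end

section \<open>The free invariant algebra\<close>

abbreviation tens_q :: "'a option list \<Rightarrow> 'k::field" where
  "tens_q \<equiv> tens_letter None"

lemma free_ideal_gens_carrier:
  "{tens_q \<otimes>\<^bsub>tens_alg\<^esub> tens_q \<ominus>\<^bsub>tens_alg\<^esub> tens_q} \<union>
     {tens_q \<otimes>\<^bsub>tens_alg\<^esub> a \<otimes>\<^bsub>tens_alg\<^esub> tens_q \<ominus>\<^bsub>tens_alg\<^esub> tens_q \<otimes>\<^bsub>tens_alg\<^esub> a | a. a \<in> carrier tens_alg}
   \<subseteq> carrier (tens_alg :: ('a option list \<Rightarrow> 'k::field) ring)"
proof -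
  interpret ring "tens_alg :: ('a option list \<Rightarrow> 'k) ring"
    by (rule ring_tens_alg)
  show ?thesis
    by (auto simp: tens_letter_carrier)
qed

lemma ideal_free_ideal: "ideal (free_ideal :: ('a option list \<Rightarrow> 'k::field) set) tens_alg"
  unfolding free_ideal_def by (rule ring.genideal_ideal[OF ring_tens_alg free_ideal_gens_carrier])

lemma tens_q_idem_mod:
  "tens_q \<otimes>\<^bsub>tens_alg\<^esub> tens_q \<ominus>\<^bsub>tens_alg\<^esub> tens_q \<in> (free_ideal :: ('a option list \<Rightarrow> 'k::field) set)"
  using ring.genideal_self[OF ring_tens_alg free_ideal_gens_carrier] unfolding free_ideal_def by blast

lemma tens_q_absorb_mod:
  "a \<in> carrier tens_alg \<Longrightarrow> tens_q \<otimes>\<^bsub>tens_alg\<^esub> a \<otimes>\<^bsub>tens_alg\<^esub> tens_q \<ominus>\<^bsub>tens_alg\<^esub> tens_q \<otimes>\<^bsub>tens_alg\<^esub> a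
     \<in> (free_ideal :: ('a option list \<Rightarrow> 'k::field) set)"
  using ring.genideal_self[OF ring_tens_alg free_ideal_gens_carrier] unfolding free_ideal_def by blast

lemma free_ideal_subset_kernel:
  fixes h :: "('a option list \<Rightarrow> 'k::field) \<Rightarrow> 'b"
  assumes h: "ring_hom_ring tens_alg B h"
    and idem: "h tens_q \<otimes>\<^bsub>B\<^esub> h tens_q = h tens_q"
    and absorb: "\<And>a. a \<in> carrier tens_alg \<Longrightarrow> h tens_q \<otimes>\<^bsub>B\<^esub> h a \<otimes>\<^bsub>B\<^esub> h tens_q = h tens_q \<otimes>\<^bsub>B\<^esub> h a"
  shows "free_ideal \<subseteq> a_kernel tens_alg B h"
proof -
  interpret h: ring_hom_ring tens_alg B h by fact
  have minus: "h (x \<ominus>\<^bsub>tens_alg\<^esub> y) = h x \<ominus>\<^bsub>B\<^esub> h y"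
    if "x \<in> carrier tens_alg" "y \<in> carrier tens_alg" for x y
    using that by (simp add: a_minus_def)
  have "{tens_q \<otimes>\<^bsub>tens_alg\<^esub> tens_q \<ominus>\<^bsub>tens_alg\<^esub> tens_q} \<union>
     {tens_q \<otimes>\<^bsub>tens_alg\<^esub> a \<otimes>\<^bsub>tens_alg\<^esub> tens_q \<ominus>\<^bsub>tens_alg\<^esub> tens_q \<otimes>\<^bsub>tens_alg\<^esub> a | a. a \<in> carrier tens_alg}
     \<subseteq> {z \<in> carrier tens_alg. h z = \<zero>\<^bsub>B\<^esub>}"
    by (auto simp: minus idem absorb a_minus_def h.S.r_neg tens_letter_carrier)
  then show ?thesis
    unfolding free_ideal_def a_kernel_def'[symmetric]
    by (intro h.R.genideal_minimal h.kernel_is_ideal)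
qed

lemma kalgebra_free_inv: "kalgebra (free_inv :: ('a option list \<Rightarrow> 'k::field) set ring) free_inv_sm"
  unfolding free_inv_def free_inv_sm_def
  by (rule kalgebra.kalgebra_quot[OF kalgebra_tens_alg ideal_free_ideal])

section \<open>The enveloping algebra\<close>

definition lie_tens :: "('k::field \<Rightarrow> 'L::ab_group_add \<Rightarrow> 'L) \<Rightarrow> ('j \<Rightarrow> 'L) \<Rightarrow> 'L \<Rightarrow> 'j option list \<Rightarrow> 'k" where
  "lie_tens sL b x = (\<lambda>w. case w of [Some j] \<Rightarrow> module.representation sL (range b) x (b j) | _ \<Rightarrow> 0)"

locale enveloping_setting =
  fixes sL :: "'k::field \<Rightarrow> 'L::ab_group_add \<Rightarrow> 'L" and br :: "'L \<Rightarrow> 'L \<Rightarrow> 'L"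
    and b :: "'j \<Rightarrow> 'L" and k :: 'k
  assumes lie: "lie_algebra sL br" and inj_b: "inj b"
    and indep: "module.independent sL (range b)" and spans: "module.span sL (range b) = UNIV"
begin

abbreviation "FI \<equiv> (free_inv :: ('j option list \<Rightarrow> 'k) set ring)"
abbreviation "RR \<equiv> rel_ideal sL br b k"
abbreviation "UU \<equiv> env_U sL br b k"
abbreviation "smU \<equiv> env_sm sL br b k"
abbreviation "qU \<equiv> env_q sL br b k"
abbreviation "iU \<equiv> env_i sL br b k"

lemma module_sL: "Modules.module sL"
  using lie by (simp add: lie_algebra_def module_iff_vector_space)

lemma lie_tens_carrier: "lie_tens sL b x \<in> carrier tens_alg"
proof -
  have "{w. lie_tens sL b x w \<noteq> 0}
      \<subseteq> (\<lambda>j. [Some j]) ` (b -` {v. module.representation sL (range b) x v \<noteq> 0})"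
  proof
    fix w
    assume "w \<in> {w. lie_tens sL b x w \<noteq> 0}"
    then show "w \<in> (\<lambda>j. [Some j]) ` (b -` {v. module.representation sL (range b) x v \<noteq> 0})"
      by (auto simp: lie_tens_def split: list.splits option.splits)
  qed
  moreover have "finite (b -` {v. module.representation sL (range b) x v \<noteq> 0})"
    using inj_b module.finite_representation[OF module_sL] by (intro finite_vimageI) auto
  ultimately show ?thesis
    by (auto simp: tens_alg_carrier intro: finite_subset)
qed

lemma lie_tens_add: "lie_tens sL b (x + y) = lie_tens sL b x \<oplus>\<^bsub>tens_alg\<^esub> lie_tens sL b y"
  using module.representation_add[OF module_sL indep, of y x] spans
  by (auto simp: lie_tens_def tens_alg_add split: list.splits option.splits)

lemma lie_tens_smult: "lie_tens sL b (sL c x) = tens_sm c (lie_tens sL b x)"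
  using module.representation_scale[OF module_sL indep, of x c] spans
  by (auto simp: lie_tens_def tens_sm_def split: list.splits option.splits)

lemma lie_tens_basis: "lie_tens sL b (b j) = tens_letter (Some j)"
proof -
  have "module.representation sL (range b) (b j) = (\<lambda>v. if v = b j then 1 else 0)"
    by (rule module.representation_basis[OF module_sL indep]) simp
  then show ?thesis
    by (auto simp: lie_tens_def tens_letter_def inj_eq[OF inj_b] split: list.splits option.splits)
qed

lemma hat_i_eq: "hat_i sL b x = free_ideal +>\<^bsub>tens_alg\<^esub> lie_tens sL b x"
  by (simp add: hat_i_def lie_tens_def)

lemma hat_i_carrier: "hat_i sL b x \<in> carrier FI"
  by (auto simp: hat_i_eq free_inv_def FactRing_carrier_rcos intro: lie_tens_carrier)

lemma free_inv_q_carrier: "(free_inv_q :: ('j option list \<Rightarrow> 'k) set) \<in> carrier FI"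
  by (auto simp: free_inv_q_def free_inv_def FactRing_carrier_rcos intro: tens_letter_carrier)

lemma rel6_image:
  assumes h: "ring_hom_ring FI B h" and B: "kalgebra B smB"
    and h_smult: "\<And>c X. X \<in> carrier FI \<Longrightarrow> h (free_inv_sm c X) = smB c (h X)"
  shows "h (rel6 sL br b k x y) = h (hat_i sL b (br x y))
    \<ominus>\<^bsub>B\<^esub> br6 B smB (h free_inv_q) k (h (hat_i sL b x)) (h (hat_i sL b y))"
proof -
  interpret h: ring_hom_ring FI B h by fact
  interpret F: kalgebra FI free_inv_sm by (rule kalgebra_free_inv)
  interpret B: kalgebra B smB by fact
  have regroup: "H \<ominus>\<^bsub>B\<^esub> a \<oplus>\<^bsub>B\<^esub> b' \<oplus>\<^bsub>B\<^esub> c \<ominus>\<^bsub>B\<^esub> d \<ominus>\<^bsub>B\<^esub> e \<oplus>\<^bsub>B\<^esub> f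
      = H \<ominus>\<^bsub>B\<^esub> (a \<ominus>\<^bsub>B\<^esub> b' \<ominus>\<^bsub>B\<^esub> c \<oplus>\<^bsub>B\<^esub> d \<oplus>\<^bsub>B\<^esub> e \<ominus>\<^bsub>B\<^esub> f)"
    if "H \<in> carrier B" "a \<in> carrier B" "b' \<in> carrier B" "c \<in> carrier B" "d \<in> carrier B"
      "e \<in> carrier B" "f \<in> carrier B" for H a b' c d e f
    using that by algebra
  have "h (rel6 sL br b k x y) = h (hat_i sL b (br x y))
    \<ominus>\<^bsub>B\<^esub> h (hat_i sL b x) \<otimes>\<^bsub>B\<^esub> h (hat_i sL b y) \<oplus>\<^bsub>B\<^esub> h (hat_i sL b y) \<otimes>\<^bsub>B\<^esub> h (hat_i sL b x)
    \<oplus>\<^bsub>B\<^esub> h (hat_i sL b x) \<otimes>\<^bsub>B\<^esub> h (hat_i sL b y) \<otimes>\<^bsub>B\<^esub> h free_inv_q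
    \<ominus>\<^bsub>B\<^esub> h (hat_i sL b y) \<otimes>\<^bsub>B\<^esub> h (hat_i sL b x) \<otimes>\<^bsub>B\<^esub> h free_inv_q
    \<ominus>\<^bsub>B\<^esub> smB k (h (hat_i sL b x) \<otimes>\<^bsub>B\<^esub> h free_inv_q \<otimes>\<^bsub>B\<^esub> h (hat_i sL b y))
    \<oplus>\<^bsub>B\<^esub> smB k (h (hat_i sL b y) \<otimes>\<^bsub>B\<^esub> h free_inv_q \<otimes>\<^bsub>B\<^esub> h (hat_i sL b x))"
    unfolding rel6_def Let_def
    by (simp add: a_minus_def h_smult hat_i_carrier free_inv_q_carrier)
  also have "\<dots> = h (hat_i sL b (br x y))
    \<ominus>\<^bsub>B\<^esub> br6 B smB (h free_inv_q) k (h (hat_i sL b x)) (h (hat_i sL b y))"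
    unfolding br6_def by (rule regroup) (simp_all add: hat_i_carrier free_inv_q_carrier)
  finally show ?thesis .
qed

lemma ideal_rel_ideal: "ideal RR FI"
proof -
  interpret F: kalgebra FI free_inv_sm
    by (rule kalgebra_free_inv)
  show ?thesis
    unfolding rel_ideal_def rel6_def Let_def
    by (rule F.genideal_ideal) (auto simp: hat_i_carrier free_inv_q_carrier)
qed

lemma rel6_mem_rel_ideal: "rel6 sL br b k x y \<in> RR"
proof -
  interpret F: kalgebra FI free_inv_sm
    by (rule kalgebra_free_inv)
  have "{rel6 sL br b k x y |x y. True} \<subseteq> RR"
    unfolding rel_ideal_def
    by (rule F.genideal_self) (auto simp: rel6_def Let_def hat_i_carrier free_inv_q_carrier)
  then show ?thesis
    by blast
qed

lemma kalgebra_env: "kalgebra UU smU"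
  unfolding env_U_def env_sm_def
  by (rule kalgebra.kalgebra_quot[OF kalgebra_free_inv ideal_rel_ideal])

lemma rel_proj_ring_hom: "ring_hom_ring FI UU ((+>\<^bsub>FI\<^esub>) RR)"
  unfolding env_U_def by (rule ideal.rcos_ring_hom_ring[OF ideal_rel_ideal])

lemma rel_proj_smult: "X \<in> carrier FI \<Longrightarrow> RR +>\<^bsub>FI\<^esub> free_inv_sm c X = smU c (RR +>\<^bsub>FI\<^esub> X)"
  unfolding env_sm_def by (rule kalgebra.quot_sm_rcos[OF kalgebra_free_inv ideal_rel_ideal, symmetric])

definition env_proj :: "('j option list \<Rightarrow> 'k) \<Rightarrow> ('j option list \<Rightarrow> 'k) set set" where
  "env_proj F = RR +>\<^bsub>FI\<^esub> (free_ideal +>\<^bsub>tens_alg\<^esub> F)"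

lemma env_proj_ring_hom: "ring_hom_ring tens_alg UU env_proj"
proof -
  have "(+>\<^bsub>FI\<^esub>) RR \<circ> (+>\<^bsub>tens_alg\<^esub>) free_ideal \<in> ring_hom tens_alg UU"
    using ideal.rcos_ring_hom[OF ideal_free_ideal] ring_hom_ring.homh[OF rel_proj_ring_hom]
    unfolding free_inv_def by (rule ring_hom_trans)
  then show ?thesis
    by (intro ring_hom_ringI2 ring_tens_alg kalgebra.axioms(1)[OF kalgebra_env])
      (simp add: env_proj_def[abs_def] comp_def)
qed

lemma env_proj_smult:
  assumes "F \<in> carrier tens_alg"
  shows "env_proj (tens_sm c F) = smU c (env_proj F)"
proof -
  have "free_inv_sm c (free_ideal +>\<^bsub>tens_alg\<^esub> F) = free_ideal +>\<^bsub>tens_alg\<^esub> tens_sm c F"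
    unfolding free_inv_sm_def
    by (rule kalgebra.quot_sm_rcos[OF kalgebra_tens_alg ideal_free_ideal assms])
  moreover have "free_ideal +>\<^bsub>tens_alg\<^esub> F \<in> carrier FI"
    using assms by (auto simp: free_inv_def FactRing_carrier_rcos)
  ultimately show ?thesis
    unfolding env_proj_def by (metis rel_proj_smult)
qed

lemma env_proj_onto: "carrier UU = env_proj ` carrier tens_alg"
  by (auto simp: env_U_def free_inv_def FactRing_carrier_rcos env_proj_def)

lemma env_i_eq: "iU x = env_proj (lie_tens sL b x)"
  by (simp add: env_i_def env_proj_def hat_i_eq)

lemma env_q_eq: "qU = env_proj tens_q"
  by (simp add: env_q_def env_proj_def free_inv_q_def)

lemma env_proj_free_ideal:
  assumes "F \<in> free_ideal"
  shows "env_proj F = \<zero>\<^bsub>UU\<^esub>"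
proof -
  interpret I: ideal "free_ideal :: ('j option list \<Rightarrow> 'k) set" tens_alg
    by (rule ideal_free_ideal)
  interpret R: ideal RR FI
    by (rule ideal_rel_ideal)
  have "free_ideal +>\<^bsub>tens_alg\<^esub> F = \<zero>\<^bsub>FI\<^esub>"
    using I.a_rcos_const[OF assms] by (simp add: free_inv_def FactRing_def)
  moreover have "RR +>\<^bsub>FI\<^esub> \<zero>\<^bsub>FI\<^esub> = RR"
    by (rule R.a_rcos_const[OF additive_subgroup.zero_closed[OF R.additive_subgroup_axioms]])
  ultimately show ?thesis
    by (simp add: env_proj_def env_U_def FactRing_def)
qed

lemma env_proj_eq_mod:
  assumes "x \<in> carrier tens_alg" "y \<in> carrier tens_alg" "x \<ominus>\<^bsub>tens_alg\<^esub> y \<in> free_ideal"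
  shows "env_proj x = env_proj y"
proof -
  interpret P: ring_hom_ring tens_alg UU env_proj
    by (rule env_proj_ring_hom)
  have "env_proj x \<ominus>\<^bsub>UU\<^esub> env_proj y = \<zero>\<^bsub>UU\<^esub>"
    using assms env_proj_free_ideal[OF assms(3)] by (simp add: a_minus_def)
  then show ?thesis
    using assms by (simp add: P.S.eq_of_minus_eq_zero)
qed

lemma env_q_idem: "qU \<otimes>\<^bsub>UU\<^esub> qU = qU"
proof -
  interpret P: ring_hom_ring tens_alg UU env_proj
    by (rule env_proj_ring_hom)
  show ?thesis
    unfolding env_q_eq P.hom_mult[OF tens_letter_carrier tens_letter_carrier, symmetric]
    by (intro env_proj_eq_mod tens_q_idem_mod) (simp_all add: tens_letter_carrier)
qed

lemma env_inv_carrier: "inv_carrier UU qU = carrier UU"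
proof -
  interpret P: ring_hom_ring tens_alg UU env_proj
    by (rule env_proj_ring_hom)
  have "qU \<otimes>\<^bsub>UU\<^esub> env_proj a \<otimes>\<^bsub>UU\<^esub> qU = qU \<otimes>\<^bsub>UU\<^esub> env_proj a" if a: "a \<in> carrier tens_alg" for a
  proof -
    have "qU \<otimes>\<^bsub>UU\<^esub> env_proj a \<otimes>\<^bsub>UU\<^esub> qU
        = env_proj (tens_q \<otimes>\<^bsub>tens_alg\<^esub> a \<otimes>\<^bsub>tens_alg\<^esub> tens_q)"
      using a by (simp add: env_q_eq tens_letter_carrier)
    also have "\<dots> = env_proj (tens_q \<otimes>\<^bsub>tens_alg\<^esub> a)"
      using a by (intro env_proj_eq_mod tens_q_absorb_mod) (simp_all add: tens_letter_carrier)
    also have "\<dots> = qU \<otimes>\<^bsub>UU\<^esub> env_proj a"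
      using a by (simp add: env_q_eq tens_letter_carrier)
    finally show ?thesis .
  qed
  then show ?thesis
    by (auto simp: inv_carrier_def env_proj_onto)
qed

lemma env_q_carrier: "qU \<in> carrier UU"
  by (simp add: env_q_eq env_proj_onto tens_letter_carrier)

lemma env_i_carrier: "iU x \<in> carrier UU"
  by (simp add: env_i_eq env_proj_onto lie_tens_carrier)

lemma inv_algebra_env: "inv_algebra UU smU qU"
  using kalgebra_env env_q_idem env_q_carrier
  by (simp add: inv_algebra_iff_inv_kalgebra inv_kalgebra_def inv_kalgebra_axioms_def)

lemma env_i_add: "iU (x + y) = iU x \<oplus>\<^bsub>UU\<^esub> iU y"
  using ring_hom_add[OF ring_hom_ring.homh[OF env_proj_ring_hom] lie_tens_carrier lie_tens_carrier]
  by (simp add: env_i_eq lie_tens_add)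

lemma env_i_smult: "iU (sL c x) = smU c (iU x)"
  by (simp add: env_i_eq lie_tens_smult env_proj_smult lie_tens_carrier)

lemma env_i_bracket: "iU (br x y) = br6 UU smU qU k (iU x) (iU y)"
proof -
  interpret R: ideal RR FI
    by (rule ideal_rel_ideal)
  interpret U: kalgebra UU smU
    by (rule kalgebra_env)
  have "iU (br x y) \<ominus>\<^bsub>UU\<^esub> br6 UU smU qU k (iU x) (iU y) = RR +>\<^bsub>FI\<^esub> rel6 sL br b k x y"
    unfolding env_i_def env_q_def
    by (rule rel6_image[OF rel_proj_ring_hom kalgebra_env rel_proj_smult, symmetric])
  also have "\<dots> = \<zero>\<^bsub>UU\<^esub>"
    using R.a_rcos_const[OF rel6_mem_rel_ideal] by (simp add: env_U_def FactRing_def)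
  finally show ?thesis
    by (rule U.eq_of_minus_eq_zero[rotated 2]) (simp_all add: br6_def env_i_carrier env_q_carrier)
qed

lemma lie_hom6_env_i: "lie_hom6 sL br k UU smU qU iU"
  unfolding lie_hom6_def env_inv_carrier
  by (simp add: env_i_add env_i_smult env_i_bracket env_i_carrier)

end

section \<open>The universal property\<close>

locale enveloping_target = enveloping_setting sL br b k
  for sL :: "'k::field \<Rightarrow> 'L::ab_group_add \<Rightarrow> 'L" and br and b :: "'j \<Rightarrow> 'L" and k +
  fixes A :: "'b ring" and smA :: "'k \<Rightarrow> 'b \<Rightarrow> 'b" and qA :: 'b and f :: "'L \<Rightarrow> 'b"
  assumes target: "inv_algebra A smA qA" and f_lie_hom: "lie_hom6 sL br k A smA qA f"
begin

sublocale A: inv_kalgebra A smA qA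
  using target by (simp add: inv_algebra_iff_inv_kalgebra)

lemma f_inv: "f x \<in> inv_carrier A qA"
  using f_lie_hom by (simp add: lie_hom6_def)

lemma f_carrier [simp]: "f x \<in> carrier A"
  using f_inv by (simp add: inv_carrier_def)

lemma f_add: "f (x + y) = f x \<oplus>\<^bsub>A\<^esub> f y"
  using f_lie_hom by (simp add: lie_hom6_def)

lemma f_smult: "f (sL c x) = smA c (f x)"
  using f_lie_hom by (simp add: lie_hom6_def)

lemma f_bracket: "f (br x y) = br6 A smA qA k (f x) (f y)"
  using f_lie_hom by (simp add: lie_hom6_def)

lemma f_zero: "f 0 = \<zero>\<^bsub>A\<^esub>"
proof -
  have "f 0 \<oplus>\<^bsub>A\<^esub> f 0 = f 0 \<oplus>\<^bsub>A\<^esub> \<zero>\<^bsub>A\<^esub>"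
    using f_add[of 0 0] by simp
  then show ?thesis
    by simp
qed

lemma f_sum: "f (\<Sum>i\<in>I. h i) = finsum A (\<lambda>i. f (h i)) I"
  by (induction I rule: infinite_finite_induct) (simp_all add: f_zero f_add A.finsum_insert Pi_iff)

definition gen_image :: "'j option \<Rightarrow> 'b" where
  "gen_image a = (case a of Some j \<Rightarrow> f (b j) | None \<Rightarrow> qA)"

lemma gen_image_inv: "gen_image a \<in> inv_carrier A qA"
  by (cases a) (simp_all add: gen_image_def f_inv A.inv_carrier_q)

sublocale tens_evaluation A smA gen_image
  using gen_image_inv by unfold_locales (simp add: inv_carrier_def)

abbreviation "lift_tens \<equiv> tens_eval A smA gen_image"

lemma word_eval_inv: "word_eval A gen_image w \<in> inv_carrier A qA"
  by (induction w) (simp_all add: A.inv_carrier_one A.inv_carrier_mult gen_image_inv)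

lemma lift_tens_inv: "lift_tens F \<in> inv_carrier A qA"
  unfolding tens_eval_def
  by (intro A.inv_carrier_finsum A.inv_carrier_smult word_eval_inv)

lemma lift_tens_q: "lift_tens tens_q = qA"
  by (simp add: tens_letter_eq_word tens_eval_word gen_image_def)

lemma lift_tens_lie_tens: "lift_tens (lie_tens sL b x) = f x"
proof -
  let ?r = "module.representation sL (range b) x"
  define V where "V = {v. ?r v \<noteq> 0}"
  define J where "J = b -` V"
  have V: "finite V"
    unfolding V_def by (rule module.finite_representation[OF module_sL])
  have "V \<subseteq> range b"
    unfolding V_def using module.representation_ne_zero[OF module_sL] by blast
  then have V_J: "V = b ` J"
    unfolding J_def by auto
  have J: "finite J"
    unfolding J_def using V inj_b by (intro finite_vimageI) auto
  have "lift_tens (lie_tens sL b x) = finsum A (\<lambda>w. smA (lie_tens sL b x w) (word_eval A gen_image w))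
      ((\<lambda>j. [Some j]) ` J)"
  proof (rule tens_eval_eq)
    show "{w. lie_tens sL b x w \<noteq> 0} \<subseteq> (\<lambda>j. [Some j]) ` J"
    proof
      fix w
      assume "w \<in> {w. lie_tens sL b x w \<noteq> 0}"
      then show "w \<in> (\<lambda>j. [Some j]) ` J"
        by (auto simp: lie_tens_def J_def V_def split: list.splits option.splits)
    qed
  qed (use J in simp)
  also have "\<dots> = finsum A (\<lambda>j. smA (?r (b j)) (f (b j))) J"
    by (subst A.finsum_reindex) (auto simp: inj_on_def lie_tens_def gen_image_def intro!: A.finsum_cong')
  also have "\<dots> = finsum A (\<lambda>v. f (sL (?r v) v)) V"
    unfolding V_J
    by (subst A.finsum_reindex) (auto simp: inj_on_def inj_eq[OF inj_b] f_smult intro!: A.finsum_cong')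
  also have "\<dots> = f (\<Sum>v\<in>V. sL (?r v) v)"
    by (rule f_sum[symmetric])
  also have "(\<Sum>v\<in>V. sL (?r v) v) = x"
    unfolding V_def by (rule module.sum_nonzero_representation_eq[OF module_sL indep]) (simp add: spans)
  finally show ?thesis .
qed

lemma lift_tens_ring_hom: "ring_hom_ring tens_alg A lift_tens"
  by (intro ring_hom_ringI2 ring_tens_alg A.ring_axioms tens_eval_ring_hom)

lemma free_ideal_subset_lift_kernel: "free_ideal \<subseteq> a_kernel tens_alg A lift_tens"
  using lift_tens_inv by (intro free_ideal_subset_kernel[OF lift_tens_ring_hom])
    (simp_all add: lift_tens_q A.q_idem inv_carrier_def)

definition free_lift :: "('j option list \<Rightarrow> 'k) set \<Rightarrow> 'b" where
  "free_lift X = the_elem (lift_tens ` X)"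

lemma free_lift_ring_hom: "ring_hom_ring FI A free_lift"
  unfolding free_lift_def[abs_def] free_inv_def
  by (intro ring_hom_ringI2 ideal.quotient_is_ring[OF ideal_free_ideal] A.ring_axioms
      the_elem_image_ring_hom[OF lift_tens_ring_hom ideal_free_ideal free_ideal_subset_lift_kernel])

lemma free_lift_rcos: "F \<in> carrier tens_alg \<Longrightarrow> free_lift (free_ideal +>\<^bsub>tens_alg\<^esub> F) = lift_tens F"
  unfolding free_lift_def
  by (rule the_elem_image_rcos[OF lift_tens_ring_hom ideal_free_ideal free_ideal_subset_lift_kernel])

lemma free_lift_smult: "X \<in> carrier FI \<Longrightarrow> free_lift (free_inv_sm c X) = smA c (free_lift X)"
  by (auto simp: free_inv_def FactRing_carrier_rcos free_inv_sm_def free_lift_rcos tens_eval_smult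
      kalgebra.quot_sm_rcos[OF kalgebra_tens_alg ideal_free_ideal]
      kalgebra.smult_closed[OF kalgebra_tens_alg])

lemma rel_ideal_subset_free_lift_kernel: "RR \<subseteq> a_kernel FI A free_lift"
proof -
  interpret L: ring_hom_ring FI A free_lift
    by (rule free_lift_ring_hom)
  have "free_lift (rel6 sL br b k x y) = \<zero>\<^bsub>A\<^esub>" for x y
  proof -
    have "free_lift (rel6 sL br b k x y) = f (br x y) \<ominus>\<^bsub>A\<^esub> br6 A smA qA k (f x) (f y)"
      by (simp add: rel6_image[OF free_lift_ring_hom A.kalgebra_axioms free_lift_smult]
          hat_i_eq free_inv_q_def free_lift_rcos lie_tens_carrier lift_tens_lie_tens
          tens_letter_carrier lift_tens_q)
    moreover have "br6 A smA qA k (f x) (f y) \<in> carrier A"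
      by (simp add: br6_def)
    ultimately show ?thesis
      by (simp add: f_bracket a_minus_def A.r_neg)
  qed
  then have "{rel6 sL br b k x y | x y. True} \<subseteq> a_kernel FI A free_lift"
    unfolding a_kernel_def' using rel6_mem_rel_ideal ideal.Icarr[OF ideal_rel_ideal] by blast
  then show ?thesis
    unfolding rel_ideal_def by (rule L.R.genideal_minimal[OF L.kernel_is_ideal])
qed

definition env_lift :: "('j option list \<Rightarrow> 'k) set set \<Rightarrow> 'b" where
  "env_lift X = the_elem (free_lift ` X)"

lemma env_lift_ring_hom: "env_lift \<in> ring_hom UU A"
  unfolding env_lift_def[abs_def] env_U_def
  by (rule the_elem_image_ring_hom[OF free_lift_ring_hom ideal_rel_ideal rel_ideal_subset_free_lift_kernel])

lemma env_lift_proj: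
  assumes "F \<in> carrier tens_alg"
  shows "env_lift (env_proj F) = lift_tens F"
proof -
  have "free_ideal +>\<^bsub>tens_alg\<^esub> F \<in> carrier FI"
    using assms by (auto simp: free_inv_def FactRing_carrier_rcos)
  then show ?thesis
    unfolding env_lift_def env_proj_def
    by (simp add: the_elem_image_rcos[OF free_lift_ring_hom ideal_rel_ideal
          rel_ideal_subset_free_lift_kernel] free_lift_rcos[OF assms])
qed

lemma env_lift_inv_hom: "inv_hom UU smU qU A smA qA env_lift"
  using env_lift_ring_hom
proof (rule ring_hom_imp_inv_hom)
  fix c X
  assume "X \<in> carrier UU"
  then obtain F where "F \<in> carrier tens_alg" "X = env_proj F"
    by (auto simp: env_proj_onto)
  then show "env_lift (smU c X) = smA c (env_lift X)" "env_lift X \<in> inv_carrier A qA"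
    by (simp_all add: env_proj_smult[symmetric] env_lift_proj tens_eval_smult lift_tens_inv
        kalgebra.smult_closed[OF kalgebra_tens_alg])
next
  show "env_lift qU = qA"
    by (simp add: env_q_eq env_lift_proj lift_tens_q tens_letter_carrier)
qed

lemma env_lift_env_i: "f x = env_lift (iU x)"
  by (simp add: env_i_eq env_lift_proj lie_tens_carrier lift_tens_lie_tens)

lemma env_lift_unique:
  assumes g: "inv_hom UU smU qU A smA qA g" and g_i: "\<And>x. f x = g (iU x)"
    and u: "u \<in> carrier UU"
  shows "g u = env_lift u"
proof -
  have g_hom: "g \<in> ring_hom UU A"
    by (rule inv_hom_imp_ring_hom[OF env_inv_carrier g])
  have "(\<lambda>F. g (env_proj F)) \<in> ring_hom tens_alg A"
    using ring_hom_trans[OF ring_hom_ring.homh[OF env_proj_ring_hom] g_hom] by (simp add: comp_def)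
  moreover have "g (env_proj (tens_sm c F)) = smA c (g (env_proj F))" if "F \<in> carrier tens_alg" for c F
    using g that by (simp add: env_proj_smult inv_hom_def env_inv_carrier env_proj_onto)
  moreover have "g (env_proj (tens_letter a)) = gen_image a" for a
    using g by (cases a) (simp_all add: gen_image_def g_i env_i_eq lie_tens_basis env_q_eq inv_hom_def)
  ultimately have "g (env_proj F) = lift_tens F" if "F \<in> carrier tens_alg" for F
    using that by (rule tens_eval_unique)
  moreover obtain F where "F \<in> carrier tens_alg" "u = env_proj F"
    using u by (auto simp: env_proj_onto)
  ultimately show ?thesis
    by (simp add: env_lift_proj)
qed

end

context enveloping_setting
begin

lemma env_universal:
  fixes A :: "'b ring"
  assumes "inv_algebra A smA qA" "lie_hom6 sL br k A smA qA f"
  shows "\<exists>f'. inv_hom UU smU qU A smA qA f' \<and> (\<forall>x. f x = f' (iU x))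
    \<and> (\<forall>g. inv_hom UU smU qU A smA qA g \<and> (\<forall>x. f x = g (iU x))
          \<longrightarrow> (\<forall>u\<in>inv_carrier UU qU. g u = f' u))"
proof -
  interpret enveloping_target sL br b k A smA qA f
    by (intro enveloping_target.intro enveloping_setting_axioms enveloping_target_axioms.intro assms)
  show ?thesis
  proof (intro exI conjI allI impI ballI)
    show "inv_hom UU smU qU A smA qA env_lift"
      by (rule env_lift_inv_hom)
    show "f x = env_lift (iU x)" for x
      by (rule env_lift_env_i)
    fix g u
    assume "inv_hom UU smU qU A smA qA g \<and> (\<forall>x. f x = g (iU x))" "u \<in> inv_carrier UU qU"
    then show "g u = env_lift u"
      using env_lift_unique[of g u] env_inv_carrier by blast
  qed
qed

end

theorem proposition3p1:
  fixes sL :: "'k::field \<Rightarrow> 'L::ab_group_add \<Rightarrow> 'L"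
    and br :: "'L \<Rightarrow> 'L \<Rightarrow> 'L"
    and b :: "'j \<Rightarrow> 'L"
    and k :: 'k
  assumes lie: "lie_algebra sL br"
    and inj_b: "inj b"
    and indep: "module.independent sL (range b)"
    and spans: "module.span sL (range b) = UNIV"
    and k_nz: "k \<noteq> 0"
  shows "inv_algebra (env_U sL br b k) (env_sm sL br b k) (env_q sL br b k)
    \<and> lie_hom6 sL br k (env_U sL br b k) (env_sm sL br b k) (env_q sL br b k) (env_i sL br b k)
    \<and> (\<forall>(A :: 'b ring) (smA :: 'k \<Rightarrow> 'b \<Rightarrow> 'b) qA f.
          inv_algebra A smA qA \<and> lie_hom6 sL br k A smA qA f \<longrightarrow>
          (\<exists>f'. inv_hom (env_U sL br b k) (env_sm sL br b k) (env_q sL br b k) A smA qA f'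
                \<and> (\<forall>x. f x = f' (env_i sL br b k x))
                \<and> (\<forall>g. inv_hom (env_U sL br b k) (env_sm sL br b k) (env_q sL br b k) A smA qA g
                        \<and> (\<forall>x. f x = g (env_i sL br b k x))
                        \<longrightarrow> (\<forall>u\<in>inv_carrier (env_U sL br b k) (env_q sL br b k). g u = f' u))))"
proof -
  interpret enveloping_setting sL br b k
    using lie inj_b indep spans by unfold_locales
  show ?thesis
    by (intro conjI allI impI inv_algebra_env lie_hom6_env_i env_universal) simp_all
qed

end
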